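(* Let $m\ge1$ and let $m_0$ be the squarefree part of $m$. Then \[h_m(1),\ h_m'(1),\ h_m''(1)\ll\frac{\log^2(m+1)}{m_0}.\] Moreover, for any fixed $1/2<\sigma<1$, \[\sup_{\Re(s)>\sigma}|h_m(s)|\ll\frac{m^{O(1/\log(1+m)^{\sigma/2})}}{m_0}.\]
   Context: Write $m=2^{e_1}p_2^{e_2}\cdots p_r^{e_r}$ with $e_1\ge0$, $p_j$ distinct odd primes, $e_j\ge1$; let $m_0'$ be the squarefree part of $m/2^{e_1}$ and $\omega(m_0')$ its number of prime factors. For complex $s$ with $\Re(s)>1/2$, \[h_m(s)=\frac{(-1)^{\omega(m_0')}}{m_0'}\,\frac{\prod_{2\le j\le r,\ e_j\text{ even}}\bigl(1-\frac2{p_j}\bigr)\bigl(1+\frac{2(p_j-1)}{(p_j-2)(p_j^s-1)}\bigr)}{\prod_{p\mid m}\bigl(1+\frac2{p^s-1}\bigr)}\,\tilde\kappa(m,s),\] where $\tilde\kappa(m,s)=1$ if $m$ is odd and $\tilde\kappa(m,s)=\frac{(-1)^{e_1}}2\frac{8^s+4^s}{8^s+2^s+2}\bigl(1+\frac{2(1+(-1)^{e_1})}{4^s(2^s-1)}\bigr)$ if $m$ is even. Derivatives are with respect to $s$. *)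

theory Defs
  imports "HOL-Analysis.Analysis" "HOL-Computational_Algebra.Computational_Algebra"
begin

text \<open>Squarefree part of n: product of primes occurring to an odd power,
  so that n = sqf_part n * (square).\<close>
definition sqf_part :: "nat \<Rightarrow> nat" where
  "sqf_part n = (\<Prod>p\<in>{p\<in>prime_factors n. odd (multiplicity p n)}. p)"

definition kappa_t :: "nat \<Rightarrow> complex \<Rightarrow> complex" where
  "kappa_t m s =
     (if odd m then 1
      else (let e1 = multiplicity (2::nat) m in
        ((-1) ^ e1 / 2) * ((8 powr s + 4 powr s) / (8 powr s + 2 powr s + 2))
        * (1 + 2 * (1 + (-1) ^ e1) / (4 powr s * (2 powr s - 1)))))"

definition h :: "nat \<Rightarrow> complex \<Rightarrow> complex" where
  "h m s =
     (let m' = m div 2 ^ multiplicity (2::nat) m;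
          m0' = sqf_part m'
      in ((-1) ^ card (prime_factors m0') / of_nat m0')
         * ((\<Prod>p\<in>{p\<in>prime_factors m. p \<noteq> 2 \<and> even (multiplicity p m)}.
               (1 - 2 / of_nat p) * (1 + 2 * (of_nat p - 1) / ((of_nat p - 2) * (of_nat p powr s - 1))))
            / (\<Prod>p\<in>prime_factors m. 1 + 2 / (of_nat p powr s - 1)))
         * kappa_t m s)"

end

theory Submission
  imports Defs "HOL-Complex_Analysis.Cauchy_Integral_Formula"
begin

(*
  Put x = p powr s. After pairing each numerator factor of h m s with the denominator factor of
  the same prime, every prime p dividing m contributes either (x - 1) / (x + 1) or
  ((p - 2) x + p) / (p (x + 1)), a convex combination of 1 and 1 / (x + 1). Both have modulus
  at most 1 when Re x >= 0, and at most (|x| + 1) / (|x| - 1) <= exp (7 / sqrt p) when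
  |x| > sqrt p. The factor at 2 is bounded as soon as |2 powr s| > sqrt 2, and the prefactor
  1 / m0' is at most 2 / m0.

  On the disc of radius 1 / (4 ln (m + 2)) around 1 every p powr s with p dividing m has
  nonnegative real part, so h m = O(1 / m0) there and Cauchy's inequality bounds the first two
  derivatives at 1 by O(ln (m + 1)^2 / m0). On Re s > 1/2 the Euler factors multiply to at most
  exp (7 * sum over p dividing m of 1 / sqrt p) <= exp (14 sqrt (2 ln m)), which is
  m powr O(1 / ln (1 + m) powr (sigma / 2)).
*)

lemma sqrt_2_gt_1_4: "1.4 < sqrt (2::real)"
  by (rule real_less_rsqrt) (simp add: power2_eq_square)

lemma sqrt_2_lt_2_powr: "1/2 < \<sigma> \<Longrightarrow> sqrt 2 < (2::real) powr \<sigma>"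
  using powr_less_mono[of "1/2" \<sigma> "2::real"] by (simp add: powr_half_sqrt)

lemma one_le_ln_add_2: "m \<noteq> 0 \<Longrightarrow> 1 \<le> ln (real m + 2)"
  using exp_le ln_ge_iff[of "real m + 2" 1] by simp

lemma ln_1_plus_le_2_ln:
  fixes x :: real
  assumes "2 \<le> x"
  shows "ln (1 + x) \<le> 2 * ln x"
proof -
  have "2 * x \<le> x * x"
    using assms by (intro mult_right_mono) auto
  then have "1 + x \<le> x^2"
    using assms unfolding power2_eq_square by linarith
  then have "ln (1 + x) \<le> ln (x^2)"
    using assms by (subst ln_le_cancel_iff) auto
  then show ?thesis
    using assms by (simp add: ln_realpow)
qed

lemma fact_mult_power_le_square:
  fixes l L :: real
  assumes "n \<le> 2" and "2/3 \<le> L" and "0 \<le> l" and "l \<le> 8 * L"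
  shows "fact n * l ^ n \<le> 128 * L^2"
proof -
  have "L * 1 \<le> L * (3/2 * L)"
    using assms(2) by (intro mult_left_mono) auto
  then have L: "L \<le> 3/2 * L^2"
    by (simp add: power2_eq_square)
  consider "n = 0" | "n = 1" | "n = 2"
    using assms(1) by linarith
  then show ?thesis
  proof cases
    case 1
    then show ?thesis
      using assms(2) L by simp
  next
    case 2
    then have "fact n * l ^ n = l"
      by simp
    then show ?thesis
      using assms(4) L zero_le_power2[of L] by linarith
  next
    case 3
    have "l^2 \<le> (8 * L)^2"
      using assms(3,4) by (intro power_mono)
    then show ?thesis
      using 3 by (simp add: power_mult_distrib)
  qed
qed

lemma sum_inverse_sqrt_le:
  assumes "finite S" and "0 \<notin> S"
  shows "(\<Sum>n\<in>S. 1 / sqrt (real n)) \<le> 2 * sqrt (real (card S))"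
  using assms
proof (induction S rule: finite_linorder_max_induct)
  case (insert b A)
  define k where "k = card A + 1"
  have "A \<subseteq> {1..<b}"
    using insert.hyps(2) insert.prems by (auto simp: Suc_le_eq intro: gr0I)
  then have "k \<le> b"
    using card_mono[of "{1..<b}" A] insert.prems by (auto simp: k_def)
  then have "1 / sqrt (real b) \<le> 1 / sqrt (real k)"
    by (intro divide_left_mono) (auto simp: k_def)
  moreover have "1 / sqrt (real k) + 2 * sqrt (real k - 1) \<le> 2 * sqrt (real k)"
  proof -
    define a where "a = sqrt (real k)"
    define c where "c = sqrt (real k - 1)"
    have "2 * a * c \<le> a^2 + c^2"
      using sum_squares_bound[of a c] by simp
    moreover have "a^2 = real k" "c^2 = real k - 1" "0 < a"
      by (auto simp: a_def c_def k_def)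
    ultimately have "1 + 2 * a * c \<le> 2 * a^2" and "0 < a"
      by auto
    then show ?thesis
      unfolding a_def[symmetric] c_def[symmetric] by (simp add: field_simps power2_eq_square)
  qed
  moreover have "(\<Sum>n\<in>A. 1 / sqrt (real n)) \<le> 2 * sqrt (real k - 1)"
    using insert.IH insert.prems by (simp add: k_def)
  moreover have "b \<notin> A"
    using insert.hyps(2) by auto
  ultimately show ?case
    using insert.hyps(1) by (simp add: k_def)
qed simp

lemma norm_prod_divide_prod_le:
  fixes N D :: "'a \<Rightarrow> 'b::{real_normed_field}"
  assumes "finite A" and "B \<subseteq> A"
    and "\<And>a. a \<in> B \<Longrightarrow> norm (N a / D a) \<le> b a"
    and "\<And>a. a \<in> A - B \<Longrightarrow> norm (1 / D a) \<le> b a"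
  shows "norm ((\<Prod>a\<in>B. N a) / (\<Prod>a\<in>A. D a)) \<le> (\<Prod>a\<in>A. b a)"
proof -
  have "(\<Prod>a\<in>A. D a) = (\<Prod>a\<in>A - B. D a) * (\<Prod>a\<in>B. D a)"
    using prod.subset_diff[OF assms(2,1)] .
  then have "norm ((\<Prod>a\<in>B. N a) / (\<Prod>a\<in>A. D a))
      = (\<Prod>a\<in>B. norm (N a / D a)) * (\<Prod>a\<in>A - B. norm (1 / D a))"
    by (simp add: prod_dividef norm_mult prod_norm norm_divide)
  also have "\<dots> \<le> (\<Prod>a\<in>B. b a) * (\<Prod>a\<in>A - B. b a)"
    using assms(3,4) by (intro mult_mono prod_mono prod_nonneg) (auto intro: order_trans[OF norm_ge_zero])
  also have "\<dots> = (\<Prod>a\<in>A. b a)"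
    using prod.subset_diff[OF assms(2,1), of b] by simp
  finally show ?thesis .
qed

section \<open>Prime factors and the squarefree part\<close>

lemma prime_factor_ge_2: "p \<in> prime_factors (n::nat) \<Longrightarrow> 2 \<le> p"
  using in_prime_factors_imp_prime prime_ge_2_nat by blast

lemma two_power_card_prime_factors_le:
  fixes n :: nat
  assumes "n \<noteq> 0"
  shows "2 ^ card (prime_factors n) \<le> n"
proof -
  have "(2::nat) ^ card (prime_factors n) = (\<Prod>p\<in>prime_factors n. 2)"
    by simp
  also have "\<dots> \<le> (\<Prod>p\<in>prime_factors n. p ^ multiplicity p n)"
  proof (rule prod_mono)
    fix p
    assume p: "p \<in> prime_factors n"
    then have "p ^ 1 \<le> p ^ multiplicity p n"
      using prime_factor_ge_2[OF p] by (intro power_increasing) (auto simp: prime_factors_multiplicity)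
    then show "0 \<le> (2::nat) \<and> 2 \<le> p ^ multiplicity p n"
      using prime_factor_ge_2[OF p] by simp
  qed
  also have "\<dots> = n"
    using prime_factorization_nat[of n] assms by simp
  finally show ?thesis .
qed

lemma card_prime_factors_le_ln:
  assumes "n \<noteq> 0"
  shows "real (card (prime_factors n)) \<le> 2 * ln (real n)"
proof -
  have "(2::real) ^ card (prime_factors n) \<le> real n"
    using two_power_card_prime_factors_le[OF assms] by (metis of_nat_le_iff of_nat_numeral of_nat_power)
  then have "real (card (prime_factors n)) * ln 2 \<le> ln (real n)"
    by (metis ln_le_cancel_iff ln_realpow zero_less_numeral zero_less_power
        less_le_trans of_nat_0_less_iff assms neq0_conv)
  then show ?thesis
    using ln2_ge_two_thirds mult_left_mono[of "1/2" "ln 2" "real (card (prime_factors n))"] by simp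
qed

lemma multiplicity_div_prime_power:
  fixes n :: nat
  assumes "prime p" and "prime q" and "p \<noteq> q" and "q ^ k dvd n" and "n \<noteq> 0"
  shows "multiplicity p (n div q ^ k) = multiplicity p n"
proof -
  define r where "r = n div q ^ k"
  have n: "n = q ^ k * r"
    using assms(4) by (simp add: r_def)
  moreover have "multiplicity p (q ^ k * r) = multiplicity p (q ^ k) + multiplicity p r"
    using n assms(1,2,5) by (intro prime_elem_multiplicity_mult_distrib) auto
  ultimately show ?thesis
    unfolding r_def[symmetric] using multiplicity_distinct_prime_power[OF assms(1-3)] by simp
qed

lemma sqf_part_pos: "0 < sqf_part n"
  unfolding sqf_part_def by (intro prod_pos) (auto dest: prime_factor_ge_2)

lemma sqf_part_le_twice_sqf_part_odd_part:
  assumes "m \<noteq> 0"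
  shows "sqf_part m \<le> 2 * sqf_part (m div 2 ^ multiplicity (2::nat) m)"
proof -
  define m' where "m' = m div 2 ^ multiplicity (2::nat) m"
  have "m' \<noteq> 0"
    using assms multiplicity_dvd[of 2 m] by (auto simp: m'_def dvd_div_eq_0_iff)
  have mult: "multiplicity p m' = multiplicity p m" if "prime p" "p \<noteq> 2" for p
    unfolding m'_def using that assms by (intro multiplicity_div_prime_power multiplicity_dvd) auto
  have "{p \<in> prime_factors m. odd (multiplicity p m)}
      \<subseteq> insert 2 {p \<in> prime_factors m'. odd (multiplicity p m')}"
    using mult \<open>m' \<noteq> 0\<close> by (auto simp: prime_factors_multiplicity odd_pos)
  then have "sqf_part m dvd (\<Prod>p\<in>insert 2 {p \<in> prime_factors m'. odd (multiplicity p m')}. p)"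
    unfolding sqf_part_def by (intro prod_dvd_prod_subset) auto
  then have "sqf_part m \<le> (\<Prod>p\<in>insert 2 {p \<in> prime_factors m'. odd (multiplicity p m')}. p)"
    by (rule dvd_imp_le) (auto intro!: prod_pos dest: prime_factor_ge_2)
  also have "\<dots> \<le> 2 * sqf_part m'"
    unfolding sqf_part_def by (simp add: prod.insert_if)
  finally show ?thesis
    unfolding m'_def .
qed

section \<open>Complex powers of natural numbers\<close>

lemma of_nat_powr_eq_exp: "0 < n \<Longrightarrow> (of_nat n :: complex) powr s = exp (s * of_real (ln (real n)))"
  by (simp add: powr_def)

lemma of_nat_power_powr:
  assumes "0 < a" shows "(of_nat (a ^ k) :: complex) powr s = (of_nat a powr s) ^ k"
proof -
  have "ln (real (a ^ k)) = of_nat k * ln (real a)"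
    using assms by (simp add: ln_realpow)
  then show ?thesis
    using assms by (simp only: of_nat_powr_eq_exp zero_less_power exp_of_nat_mult [symmetric])
      (simp add: algebra_simps)
qed

lemma norm_of_nat_powr: "norm ((of_nat n :: complex) powr s) = real n powr Re s"
  by (simp add: norm_powr_real_powr)

lemma one_lt_norm_of_nat_powr: "1 < n \<Longrightarrow> 0 < Re s \<Longrightarrow> 1 < norm ((of_nat n :: complex) powr s)"
  by (simp add: norm_of_nat_powr)

lemma Re_of_nat_powr:
  "0 < n \<Longrightarrow> Re ((of_nat n :: complex) powr s) = real n powr Re s * cos (Im s * ln (real n))"
  by (simp add: powr_def Re_exp mult.commute)

lemma Re_of_nat_powr_nonneg:
  assumes "0 < n" and "\<bar>Im s * ln (real n)\<bar> \<le> pi / 2"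
  shows "0 \<le> Re ((of_nat n :: complex) powr s)"
  using cos_ge_zero[of "Im s * ln (real n)"] assms by (simp add: Re_of_nat_powr)

section \<open>The factor at the prime 2\<close>

lemma norm_square_minus_self_plus_2_ge:
  fixes x :: complex
  assumes "sqrt 2 \<le> norm x"
  shows "(norm x - sqrt 2)^2 \<le> norm (x^2 - x + 2)"
proof -
  define a where "a = (1 + \<i> * sqrt 7) / (2::complex)"
  have factor: "x^2 - x + 2 = (x - a) * (x - cnj a)"
    unfolding a_def by (simp add: algebra_simps power2_eq_square complex_eq_iff) (simp add: field_simps)
  have "norm a = sqrt 2"
    unfolding a_def by (simp add: cmod_def power_divide)
  then have "norm x - sqrt 2 \<le> norm (x - a)" "norm x - sqrt 2 \<le> norm (x - cnj a)"
    using norm_triangle_ineq2[of x a] norm_triangle_ineq2[of x "cnj a"] by auto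
  then have "(norm x - sqrt 2) * (norm x - sqrt 2) \<le> norm (x - a) * norm (x - cnj a)"
    using assms by (intro mult_mono) auto
  then show ?thesis
    by (metis factor norm_mult power2_eq_square)
qed

lemma kappa_denominators_nonzero:
  fixes x :: complex
  assumes "sqrt 2 < norm x"
  shows "x^3 + x + 2 \<noteq> 0" "x^2 * (x - 1) \<noteq> 0"
proof -
  have "x \<noteq> 1" "x \<noteq> -1" "x \<noteq> 0"
    using assms sqrt_2_gt_1_4 by auto
  moreover have "x^2 - x + 2 \<noteq> 0"
    using norm_square_minus_self_plus_2_ge[of x] assms by auto
  moreover have "x^3 + x + 2 = (x^2 - x + 2) * (x + 1)"
    by (simp add: algebra_simps power2_eq_square power3_eq_cube)
  ultimately show "x^3 + x + 2 \<noteq> 0" "x^2 * (x - 1) \<noteq> 0"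
    by (auto simp: add_eq_0_iff2)
qed

lemma kappa_t_even_eq:
  fixes s :: complex
  assumes "even m"
  defines "x \<equiv> (2::complex) powr s" and "e \<equiv> multiplicity (2::nat) m"
  shows "kappa_t m s = ((-1)^e / 2) * ((x^3 + x^2) / (x^3 + x + 2))
           * (1 + 2 * (1 + (-1)^e) / (x^2 * (x - 1)))"
proof -
  have "(8::complex) powr s = x^3" "(4::complex) powr s = x^2"
    using of_nat_power_powr[of 2 3 s] of_nat_power_powr[of 2 2 s] by (simp_all add: x_def)
  then show ?thesis
    using assms(1) by (simp add: kappa_t_def Let_def x_def e_def)
qed

lemma norm_kappa_first_factor_le:
  fixes x :: complex
  assumes "sqrt 2 < norm x"
  shows "norm ((x^3 + x^2) / (x^3 + x + 2)) \<le> (norm x / (norm x - sqrt 2))^2"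
proof -
  have "x + 1 \<noteq> 0"
    using assms sqrt_2_gt_1_4 by (auto simp: add_eq_0_iff2)
  moreover have "x^3 + x^2 = x^2 * (x + 1)" "x^3 + x + 2 = (x^2 - x + 2) * (x + 1)"
    by (simp_all add: algebra_simps power2_eq_square power3_eq_cube)
  ultimately have "norm ((x^3 + x^2) / (x^3 + x + 2)) = norm x ^ 2 / norm (x^2 - x + 2)"
    by (simp add: norm_divide norm_power)
  also have "\<dots> \<le> norm x ^ 2 / (norm x - sqrt 2)^2"
    using assms norm_square_minus_self_plus_2_ge[of x] by (intro divide_left_mono mult_pos_pos) auto
  finally show ?thesis
    by (simp add: power_divide)
qed

lemma norm_kappa_second_factor_le:
  fixes x c :: complex
  assumes "sqrt 2 < norm x" and "norm c \<le> 4"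
  shows "norm (1 + c / (x^2 * (x - 1))) \<le> 6"
proof -
  have "2 \<le> norm x ^ 2"
    using assms(1) by (metis less_imp_le power_mono real_sqrt_ge_zero real_sqrt_pow2 zero_le_numeral)
  moreover have "0.4 \<le> norm (x - 1)"
    using assms(1) sqrt_2_gt_1_4 norm_triangle_ineq2[of x 1] by simp
  ultimately have "2 * 0.4 \<le> norm (x^2 * (x - 1))"
    unfolding norm_mult norm_power by (intro mult_mono) auto
  then have "norm (c / (x^2 * (x - 1))) \<le> 4 / 0.8"
    unfolding norm_divide using assms(2) by (intro frac_le) auto
  then show ?thesis
    using norm_triangle_ineq[of 1 "c / (x^2 * (x - 1))"] by simp
qed

definition kappa_bound :: "real \<Rightarrow> real" where
  "kappa_bound \<sigma> = 3 * (2 powr \<sigma> / (2 powr \<sigma> - sqrt 2))^2"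

lemma kappa_bound_ge_1:
  assumes "1/2 < \<sigma>"
  shows "1 \<le> kappa_bound \<sigma>"
proof -
  have "1 \<le> (2 powr \<sigma> / (2 powr \<sigma> - sqrt 2))^2"
    using sqrt_2_lt_2_powr[OF assms] by (intro one_le_power) (simp add: field_simps)
  then show ?thesis
    unfolding kappa_bound_def by simp
qed

lemma norm_kappa_t_le:
  assumes "1/2 < \<sigma>" and "\<sigma> \<le> Re s"
  shows "norm (kappa_t m s) \<le> kappa_bound \<sigma>"
proof -
  define t where "t = (2::real) powr \<sigma>"
  define x where "x = (2::complex) powr s"
  define e where "e = multiplicity (2::nat) m"
  have t: "sqrt 2 < t"
    unfolding t_def using sqrt_2_lt_2_powr[OF assms(1)] .
  have x: "t \<le> norm x"
    using assms(2) by (simp add: t_def x_def norm_of_nat_powr[of 2, simplified])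
  have t_ratio: "norm x / (norm x - sqrt 2) \<le> t / (t - sqrt 2)"
    using t x by (simp add: field_simps)
  show ?thesis
  proof (cases "even m")
    case True
    have "norm (2 * (1 + (-1::complex)^e)) \<le> 4"
      by (cases "even e") auto
    then have "norm (1 + 2 * (1 + (-1)^e) / (x^2 * (x - 1))) \<le> 6"
      using t x by (intro norm_kappa_second_factor_le) auto
    moreover have "norm ((x^3 + x^2) / (x^3 + x + 2)) \<le> (norm x / (norm x - sqrt 2))^2"
      using t x by (intro norm_kappa_first_factor_le) auto
    moreover have "norm ((-1)^e / 2 :: complex) = 1/2"
      by (simp add: norm_divide norm_power)
    ultimately have "norm (kappa_t m s) \<le> 1/2 * (norm x / (norm x - sqrt 2))^2 * 6"
      unfolding kappa_t_even_eq[OF True] x_def[symmetric] e_def[symmetric] norm_mult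
      by (intro mult_mono) auto
    also have "\<dots> \<le> 1/2 * (t / (t - sqrt 2))^2 * 6"
      using t x t_ratio by (intro mult_right_mono mult_left_mono power_mono) auto
    finally show ?thesis
      by (simp add: kappa_bound_def t_def)
  qed (use kappa_bound_ge_1[OF assms(1)] in \<open>simp add: kappa_t_def\<close>)
qed

lemma kappa_t_holomorphic: "kappa_t m holomorphic_on {s. 1/2 < Re s}"
proof (cases "even m")
  case True
  define e where "e = multiplicity (2::nat) m"
  have eq: "kappa_t m = (\<lambda>s. ((-1)^e / 2) * ((((2::complex) powr s)^3 + (2 powr s)^2)
      / ((2 powr s)^3 + 2 powr s + 2)) * (1 + 2 * (1 + (-1)^e) / ((2 powr s)^2 * (2 powr s - 1))))"
    unfolding e_def by (rule ext, rule kappa_t_even_eq[OF True])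
  have "sqrt 2 < norm ((2::complex) powr s)" if "1/2 < Re s" for s
    using sqrt_2_lt_2_powr[OF that] by (simp add: norm_of_nat_powr[of 2, simplified])
  then show ?thesis
    unfolding eq using kappa_denominators_nonzero by (intro holomorphic_intros) auto
next
  case False
  then have "kappa_t m = (\<lambda>_. 1)"
    by (simp add: kappa_t_def fun_eq_iff)
  then show ?thesis
    by simp
qed

section \<open>Euler factors\<close>

lemma euler_factor_ratios:
  fixes x :: complex
  assumes "x \<noteq> 1" and "x \<noteq> -1" and "p \<noteq> 0" and "p \<noteq> 2"
  shows "(1 - 2 / of_nat p) * (1 + 2 * (of_nat p - 1) / ((of_nat p - 2) * (x - 1))) / (1 + 2 / (x - 1))
           = ((of_nat p - 2) * x + of_nat p) / (of_nat p * (x + 1))"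
    and "1 / (1 + 2 / (x - 1)) = (x - 1) / (x + 1)"
proof -
  define P where "P = (of_nat p :: complex)"
  have nonzero: "x - 1 \<noteq> 0" "x + 1 \<noteq> 0" "P \<noteq> 0" "P - 2 \<noteq> 0"
    using assms by (auto simp: P_def add_eq_0_iff2 of_nat_eq_iff[of p 2, simplified])
  have D: "1 + 2 / (x - 1) = (x + 1) / (x - 1)"
    using nonzero by (simp add: field_simps)
  then show "1 / (1 + 2 / (x - 1)) = (x - 1) / (x + 1)"
    by simp
  have "1 + 2 * (P - 1) / ((P - 2) * (x - 1)) = ((P - 2) * x + P) / ((P - 2) * (x - 1))"
    using nonzero by (simp add: divide_simps) (simp add: algebra_simps)
  moreover have "1 - 2 / P = (P - 2) / P"
    using nonzero by (simp add: field_simps)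
  ultimately show "(1 - 2 / of_nat p) * (1 + 2 * (of_nat p - 1) / ((of_nat p - 2) * (x - 1)))
      / (1 + 2 / (x - 1)) = ((of_nat p - 2) * x + of_nat p) / (of_nat p * (x + 1))"
    unfolding D P_def[symmetric] using nonzero by (simp add: divide_simps)
qed

lemma local_factor_eq_convex_combination:
  fixes x :: complex
  assumes "p \<noteq> 0" and "x + 1 \<noteq> 0"
  shows "((of_nat p - 2) * x + of_nat p) / (of_nat p * (x + 1))
           = (1 - 2 / of_nat p) + 2 / of_nat p * (1 / (x + 1))"
proof -
  have "(1 - 2 / of_nat p) + 2 / of_nat p * (1 / (x + 1))
      = ((of_nat p - 2) * (x + 1) + 2) / (of_nat p * (x + 1) :: complex)"
    using assms by (simp add: add_divide_distrib diff_divide_distrib)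
  then show ?thesis
    by (simp add: algebra_simps)
qed

lemma norm_local_factor_le:
  fixes x :: complex
  assumes "2 \<le> p" and "x + 1 \<noteq> 0" and "norm (1 / (x + 1)) \<le> B" and "1 \<le> B"
  shows "norm (((of_nat p - 2) * x + of_nat p) / (of_nat p * (x + 1))) \<le> B"
proof -
  have weight: "0 \<le> 1 - 2 / real p" "0 < 2 / real p"
    using assms(1) by (simp_all add: field_simps)
  have "p \<noteq> 0"
    using assms(1) by simp
  have "(1 - 2 / of_nat p :: complex) = of_real (1 - 2 / real p)"
    by simp
  then have "norm (1 - 2 / of_nat p :: complex) = 1 - 2 / real p"
    using weight(1) by (simp only: norm_of_real abs_of_nonneg)
  then have "norm (((of_nat p - 2) * x + of_nat p) / (of_nat p * (x + 1)))
      \<le> (1 - 2 / real p) + norm (2 / of_nat p * (1 / (x + 1)))"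
    unfolding local_factor_eq_convex_combination[OF \<open>p \<noteq> 0\<close> assms(2)]
    using norm_triangle_ineq by metis
  also have "\<dots> = (1 - 2 / real p) + 2 / real p * norm (1 / (x + 1))"
    by (simp add: norm_mult norm_divide)
  also have "\<dots> \<le> (1 - 2 / real p) * B + 2 / real p * B"
    using assms(3,4) weight by (intro add_mono mult_left_mono) (auto simp: mult_le_cancel_left1)
  finally show ?thesis
    by (simp add: algebra_simps)
qed

lemma norm_local_factors_le_1:
  fixes x :: complex
  assumes "0 \<le> Re x" and "2 \<le> p"
  shows "norm ((x - 1) / (x + 1)) \<le> 1"
    and "norm (((of_nat p - 2) * x + of_nat p) / (of_nat p * (x + 1))) \<le> 1"
proof -
  have "1 \<le> Re (x + 1)"
    using assms(1) by simp
  then have x1: "1 \<le> norm (x + 1)"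
    using complex_Re_le_cmod order_trans by blast
  have "norm (x - 1)^2 \<le> norm (x + 1)^2"
    unfolding cmod_power2 using assms(1) by (simp add: power2_eq_square algebra_simps)
  then have "norm (x - 1) \<le> norm (x + 1)"
    by (rule power2_le_imp_le) simp
  then show "norm ((x - 1) / (x + 1)) \<le> 1"
    using x1 by (simp add: norm_divide divide_le_eq_1)
  show "norm (((of_nat p - 2) * x + of_nat p) / (of_nat p * (x + 1))) \<le> 1"
    using x1 assms(2) by (intro norm_local_factor_le) (auto simp: norm_divide divide_le_eq_1)
qed

lemma norm_local_factors_le:
  fixes x :: complex
  assumes "1 < norm x" and "2 \<le> p"
  shows "norm ((x - 1) / (x + 1)) \<le> (norm x + 1) / (norm x - 1)"
    and "norm (((of_nat p - 2) * x + of_nat p) / (of_nat p * (x + 1))) \<le> (norm x + 1) / (norm x - 1)"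
proof -
  have x1: "norm x - 1 \<le> norm (x + 1)"
    using norm_triangle_ineq2[of x "-1"] by simp
  show "norm ((x - 1) / (x + 1)) \<le> (norm x + 1) / (norm x - 1)"
    unfolding norm_divide using assms(1) x1 norm_triangle_ineq4[of x 1] by (intro frac_le) auto
  have "norm (1 / (x + 1)) \<le> 1 / (norm x - 1)"
    unfolding norm_divide using assms(1) x1 by (intro frac_le) auto
  also have "\<dots> \<le> (norm x + 1) / (norm x - 1)"
    using assms(1) by (intro divide_right_mono) auto
  finally show "norm (((of_nat p - 2) * x + of_nat p) / (of_nat p * (x + 1))) \<le> (norm x + 1) / (norm x - 1)"
    using assms x1 by (intro norm_local_factor_le) auto
qed

lemma local_factor_bound_le_exp:
  assumes "2 \<le> p" and "1/2 < Re s"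
  defines "x \<equiv> norm ((of_nat p :: complex) powr s)"
  shows "(x + 1) / (x - 1) \<le> exp (7 / sqrt (real p))"
proof -
  have "real p powr (1/2) < real p powr Re s"
    using assms(1,2) by (intro powr_less_mono) auto
  then have x: "sqrt (real p) < x"
    using assms(1) by (simp add: x_def norm_of_nat_powr powr_half_sqrt)
  have "sqrt 2 \<le> sqrt (real p)"
    using assms(1) by simp
  then have p: "1.4 < sqrt (real p)"
    using sqrt_2_gt_1_4 by linarith
  have "(x + 1) / (x - 1) = 1 + 2 / (x - 1)"
    using x p by (simp add: field_simps)
  also have "\<dots> \<le> 1 + 2 / (sqrt (real p) - 1)"
    using x p assms(1) by (intro add_left_mono divide_left_mono mult_pos_pos) auto
  also have "\<dots> \<le> 1 + 7 / sqrt (real p)"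
  proof -
    have "2 / (sqrt (real p) - 1) \<le> 7 / sqrt (real p)"
      using p by (simp add: divide_simps)
    then show ?thesis
      by simp
  qed
  also have "\<dots> \<le> exp (7 / sqrt (real p))"
    by (rule exp_ge_add_one_self)
  finally show ?thesis .
qed

section \<open>Bounds for h\<close>

lemma norm_h_le:
  fixes b :: "nat \<Rightarrow> real"
  assumes "m \<noteq> 0" and "0 < Re s"
    and "\<And>p. p \<in> prime_factors m \<Longrightarrow>
      norm ((of_nat p powr s - 1) / (of_nat p powr s + 1)) \<le> b p"
    and "\<And>p. p \<in> prime_factors m \<Longrightarrow>
      norm (((of_nat p - 2) * of_nat p powr s + of_nat p) / (of_nat p * (of_nat p powr s + 1))) \<le> b p"
  shows "norm (h m s) \<le> 2 / real (sqf_part m) * (\<Prod>p\<in>prime_factors m. b p) * norm (kappa_t m s)"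
proof -
  define m0 where "m0 = sqf_part (m div 2 ^ multiplicity (2::nat) m)"
  define E where "E = {p \<in> prime_factors m. p \<noteq> 2 \<and> even (multiplicity p m)}"
  define N where "N p = (1 - 2 / of_nat p) * (1 + 2 * (of_nat p - 1) / ((of_nat p - 2) * (of_nat p powr s - 1)))"
    for p :: nat
  define D where "D p = 1 + 2 / (of_nat p powr s - 1 :: complex)" for p :: nat
  have h: "h m s = ((-1) ^ card (prime_factors m0) / of_nat m0)
      * ((\<Prod>p\<in>E. N p) / (\<Prod>p\<in>prime_factors m. D p)) * kappa_t m s"
    unfolding h_def Let_def m0_def E_def N_def D_def by simp
  have powr_ne: "of_nat p powr s \<noteq> (1::complex)" "of_nat p powr s \<noteq> (-1::complex)"
    if "p \<in> prime_factors m" for p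
    using one_lt_norm_of_nat_powr[of p s] that assms(2) prime_factor_ge_2[of p m] by auto
  have ratio: "norm ((\<Prod>p\<in>E. N p) / (\<Prod>p\<in>prime_factors m. D p)) \<le> (\<Prod>p\<in>prime_factors m. b p)"
  proof (rule norm_prod_divide_prod_le)
    show "E \<subseteq> prime_factors m"
      unfolding E_def by auto
    show "norm (N p / D p) \<le> b p" if "p \<in> E" for p
    proof -
      have "p \<in> prime_factors m" "p \<noteq> 2" "p \<noteq> 0"
        using that by (auto simp: E_def dest: prime_factor_ge_2)
      then show ?thesis
        unfolding N_def D_def using assms(4) powr_ne by (subst euler_factor_ratios(1)) auto
    qed
    show "norm (1 / D p) \<le> b p" if "p \<in> prime_factors m - E" for p
      using that assms(3) powr_ne unfolding D_def by (subst euler_factor_ratios(2)) auto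
  qed simp
  moreover have "1 / real m0 \<le> 2 / real (sqf_part m)"
    using sqf_part_le_twice_sqf_part_odd_part[OF assms(1)] sqf_part_pos[of m]
    by (simp add: m0_def field_simps)
  moreover have "0 \<le> (\<Prod>p\<in>prime_factors m. b p)"
    using ratio norm_ge_zero order_trans by blast
  ultimately show ?thesis
    unfolding h norm_mult by (intro mult_mono) (auto simp: norm_divide norm_power)
qed

lemma h_holomorphic: "h m holomorphic_on {s. 1/2 < Re s}"
proof -
  define m0 where "m0 = sqf_part (m div 2 ^ multiplicity (2::nat) m)"
  define E where "E = {p \<in> prime_factors m. p \<noteq> 2 \<and> even (multiplicity p m)}"
  have h: "h m = (\<lambda>s. ((-1) ^ card (prime_factors m0) / of_nat m0)
      * ((\<Prod>p\<in>E. (1 - 2 / of_nat p) * (1 + 2 * (of_nat p - 1) / ((of_nat p - 2) * (of_nat p powr s - 1))))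
        / (\<Prod>p\<in>prime_factors m. 1 + 2 / (of_nat p powr s - 1))) * kappa_t m s)"
    by (simp add: fun_eq_iff h_def Let_def m0_def E_def)
  have powr_ne: "of_nat p powr s - 1 \<noteq> (0::complex)" "of_nat p powr s + 1 \<noteq> (0::complex)"
    if "p \<in> prime_factors m" "1/2 < Re s" for p s
    using one_lt_norm_of_nat_powr[of p s] that prime_factor_ge_2[of p m]
    by (auto simp: add_eq_0_iff2)
  then have "1 + 2 / (of_nat p powr s - 1) \<noteq> (0::complex)"
    if "p \<in> prime_factors m" "1/2 < Re s" for p s
    using that by (simp add: field_simps)
  moreover have "(of_nat p - 2 :: complex) \<noteq> 0" if "p \<in> E" for p
    using that of_nat_eq_iff[of p 2] by (auto simp: E_def)
  ultimately show ?thesis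
    unfolding h using powr_ne kappa_t_holomorphic by (intro holomorphic_intros) (auto simp: E_def)
qed

lemma norm_h_near_1_le:
  assumes "m \<noteq> 0" and s: "norm (s - 1) \<le> 1 / (4 * ln (real m + 2))"
  shows "norm (h m s) \<le> 2 * kappa_bound (3/4) / real (sqf_part m)"
proof -
  have r: "1 / (4 * ln (real m + 2)) \<le> 1/4"
    using one_le_ln_add_2[OF assms(1)] by (simp add: field_simps)
  have "norm (s - 1) \<le> 1/4"
    using s r by linarith
  then have Re_s: "3/4 \<le> Re s"
    using abs_Re_le_cmod[of "s - 1"] by (simp add: abs_le_iff)
  have Re_powr: "0 \<le> Re ((of_nat p :: complex) powr s)" if p: "p \<in> prime_factors m" for p
  proof (rule Re_of_nat_powr_nonneg)
    have "p \<le> m"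
      using p assms(1) by (auto intro: dvd_imp_le)
    then have "0 \<le> ln (real p)" "ln (real p) \<le> ln (real m + 2)"
      using prime_factor_ge_2[OF p] by auto
    moreover have "\<bar>Im s\<bar> \<le> 1 / (4 * ln (real m + 2))"
      using abs_Im_le_cmod[of "s - 1"] s by simp
    ultimately have "\<bar>Im s * ln (real p)\<bar> \<le> 1 / (4 * ln (real m + 2)) * ln (real m + 2)"
      unfolding abs_mult by (intro mult_mono) auto
    also have "\<dots> \<le> pi / 2"
      using one_le_ln_add_2[OF assms(1)] pi_gt3 by simp
    finally show "\<bar>Im s * ln (real p)\<bar> \<le> pi / 2" .
  qed (use prime_factor_ge_2[OF p] in simp)
  have "norm (h m s) \<le> 2 / real (sqf_part m) * (\<Prod>p\<in>prime_factors m. 1) * norm (kappa_t m s)"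
    using Re_s Re_powr prime_factor_ge_2
    by (intro norm_h_le assms(1) norm_local_factors_le_1) auto
  also have "\<dots> = 2 / real (sqf_part m) * norm (kappa_t m s)"
    by simp
  also have "\<dots> \<le> 2 / real (sqf_part m) * kappa_bound (3/4)"
    using norm_kappa_t_le[of "3/4" s m] Re_s by (intro mult_left_mono) auto
  finally show ?thesis
    by simp
qed

lemma norm_higher_deriv_h_at_1_le:
  assumes "m \<noteq> 0"
  shows "norm ((deriv ^^ n) (h m) 1)
           \<le> fact n * (2 * kappa_bound (3/4) / real (sqf_part m)) * (4 * ln (real m + 2)) ^ n"
proof -
  define r where "r = 1 / (4 * ln (real m + 2))"
  have r: "0 < r" "r \<le> 1/4"
    using one_le_ln_add_2[OF assms] by (auto simp: r_def field_simps)
  have "cball 1 r \<subseteq> {s. 1/2 < Re s}"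
  proof
    fix s :: complex
    assume "s \<in> cball 1 r"
    then have "\<bar>Re (1 - s)\<bar> \<le> r"
      using abs_Re_le_cmod[of "1 - s"] by (simp add: dist_norm)
    then show "s \<in> {s. 1/2 < Re s}"
      using r by simp
  qed
  then have "h m holomorphic_on cball 1 r"
    using h_holomorphic by (rule holomorphic_on_subset[rotated])
  then have "norm ((deriv ^^ n) (h m) 1) \<le> fact n * (2 * kappa_bound (3/4) / real (sqf_part m)) / r ^ n"
    using r norm_h_near_1_le[OF assms]
    by (intro Cauchy_inequality)
      (auto simp: r_def norm_minus_commute intro: holomorphic_on_subset holomorphic_on_imp_continuous_on)
  then show ?thesis
    by (simp add: r_def power_divide)
qed

lemma norm_higher_deriv_h_at_1_le_ln_squared:
  assumes "m \<noteq> 0" and "n \<le> 2"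
  shows "norm ((deriv ^^ n) (h m) 1)
           \<le> 256 * kappa_bound (3/4) * ln (real m + 1)^2 / real (sqf_part m)"
proof -
  define L where "L = ln (real m + 1)"
  define M where "M = 2 * kappa_bound (3/4) / real (sqf_part m)"
  have "ln 2 \<le> L"
    using assms(1) by (simp add: L_def)
  then have "2/3 \<le> L"
    using ln2_ge_two_thirds by linarith
  moreover have "0 \<le> 4 * ln (real m + 2)" "4 * ln (real m + 2) \<le> 8 * L"
    using assms(1) ln_1_plus_le_2_ln[of "real m + 1"] by (simp_all add: L_def add_ac)
  ultimately have "fact n * (4 * ln (real m + 2))^n * M \<le> 128 * L^2 * M"
    using assms(2) kappa_bound_ge_1[of "3/4"]
    by (intro mult_right_mono fact_mult_power_le_square) (auto simp: M_def)
  moreover have "norm ((deriv ^^ n) (h m) 1) \<le> fact n * (4 * ln (real m + 2))^n * M"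
    using norm_higher_deriv_h_at_1_le[OF assms(1), of n] by (simp only: M_def mult_ac)
  ultimately have "norm ((deriv ^^ n) (h m) 1) \<le> 128 * L^2 * M"
    by linarith
  then show ?thesis
    by (simp add: M_def L_def mult_ac)
qed

lemma norm_h_le_exp_sqrt_ln:
  assumes "m \<noteq> 0" and "1/2 < \<sigma>" and "\<sigma> \<le> Re s"
  shows "norm (h m s) \<le> 2 * kappa_bound \<sigma> * exp (14 * sqrt (2 * ln (real m))) / real (sqf_part m)"
proof -
  define b where "b p = exp (7 / sqrt (real p))" for p :: nat
  have Re_s: "1/2 < Re s"
    using assms(2,3) by simp
  have "norm (h m s) \<le> 2 / real (sqf_part m) * (\<Prod>p\<in>prime_factors m. b p) * norm (kappa_t m s)"
  proof (rule norm_h_le[OF assms(1)])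
    fix p
    assume p: "p \<in> prime_factors m"
    have "1 < norm ((of_nat p :: complex) powr s)"
      using one_lt_norm_of_nat_powr[of p s] prime_factor_ge_2[OF p] Re_s by simp
    then show "norm ((of_nat p powr s - 1) / (of_nat p powr s + 1)) \<le> b p"
      and "norm (((of_nat p - 2) * of_nat p powr s + of_nat p) / (of_nat p * (of_nat p powr s + 1))) \<le> b p"
      using norm_local_factors_le[of "of_nat p powr s" p] local_factor_bound_le_exp[of p s]
        prime_factor_ge_2[OF p] Re_s unfolding b_def by (auto intro: order_trans)
  qed (use Re_s in simp)
  also have "\<dots> \<le> 2 / real (sqf_part m) * exp (14 * sqrt (2 * ln (real m))) * kappa_bound \<sigma>"
  proof (intro mult_mono mult_left_mono)
    have "(\<Sum>p\<in>prime_factors m. 1 / sqrt (real p)) \<le> 2 * sqrt (real (card (prime_factors m)))"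
      by (intro sum_inverse_sqrt_le) (auto dest: prime_factor_ge_2)
    also have "\<dots> \<le> 2 * sqrt (2 * ln (real m))"
      using card_prime_factors_le_ln[OF assms(1)] by simp
    finally have "7 * (\<Sum>p\<in>prime_factors m. 1 / sqrt (real p)) \<le> 14 * sqrt (2 * ln (real m))"
      by simp
    then show "(\<Prod>p\<in>prime_factors m. b p) \<le> exp (14 * sqrt (2 * ln (real m)))"
      by (simp add: b_def exp_sum [symmetric] sum_distrib_left)
    show "norm (kappa_t m s) \<le> kappa_bound \<sigma>"
      by (rule norm_kappa_t_le[OF assms(2,3)])
  qed (auto simp: b_def intro: prod_nonneg)
  finally show ?thesis
    by (simp add: mult_ac)
qed

lemma exp_sqrt_ln_le_powr:
  assumes "m \<noteq> 0" and "\<sigma> \<le> 1"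
  shows "exp (14 * sqrt (2 * ln (real m))) \<le> real m powr (28 / ln (1 + real m) powr (\<sigma>/2))"
proof (cases "m = 1")
  case False
  define L where "L = ln (real m)"
  define T where "T = ln (1 + real m) powr (\<sigma>/2)"
  have m: "2 \<le> real m"
    using assms(1) False by simp
  then have L: "0 < L"
    by (simp add: L_def)
  have "exp 1 \<le> 1 + real m"
    using exp_le m by linarith
  then have ln_1_m: "1 \<le> ln (1 + real m)"
    by (simp add: ln_ge_iff)
  have "ln (1 + real m) \<le> 2 * L"
    using ln_1_plus_le_2_ln[OF m] by (simp add: L_def)
  then have "sqrt (ln (1 + real m)) \<le> sqrt (2 * L)"
    by simp
  moreover have "T \<le> sqrt (ln (1 + real m))"
    using ln_1_m assms(2) powr_mono[of "\<sigma>/2" "1/2" "ln (1 + real m)"] by (simp add: T_def powr_half_sqrt)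
  moreover have "0 < T"
    using ln_1_m assms(1) by (simp add: T_def)
  ultimately have T: "0 < T" "T \<le> sqrt (2 * L)"
    by linarith+
  have "14 * sqrt (2 * L) = 28 * L / sqrt (2 * L)"
    using L by (simp add: field_simps)
  also have "\<dots> \<le> 28 * L / T"
    using T L by (intro divide_left_mono) auto
  finally have "exp (14 * sqrt (2 * L)) \<le> exp (28 / T * L)"
    by simp
  also have "\<dots> = real m powr (28 / T)"
    using m by (simp add: powr_def L_def)
  finally show ?thesis
    by (simp add: L_def T_def)
qed simp

lemma norm_h_le_powr:
  assumes "m \<noteq> 0" and "1/2 < \<sigma>" and "\<sigma> \<le> 1" and "\<sigma> \<le> Re s"
  shows "norm (h m s)
           \<le> 2 * kappa_bound \<sigma> * real m powr (28 / ln (1 + real m) powr (\<sigma>/2)) / real (sqf_part m)"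
proof -
  have "norm (h m s) \<le> 2 * kappa_bound \<sigma> * exp (14 * sqrt (2 * ln (real m))) / real (sqf_part m)"
    using assms by (intro norm_h_le_exp_sqrt_ln)
  also have "\<dots> \<le> 2 * kappa_bound \<sigma> * real m powr (28 / ln (1 + real m) powr (\<sigma>/2)) / real (sqf_part m)"
    using assms kappa_bound_ge_1[of \<sigma>] exp_sqrt_ln_le_powr[of m \<sigma>]
    by (intro divide_right_mono mult_left_mono) auto
  finally show ?thesis .
qed

theorem lemma17:
  shows "(\<exists>C. \<forall>m::nat. m \<ge> 1 \<longrightarrow>
            norm (h m 1) \<le> C * ln (real m + 1) ^ 2 / real (sqf_part m)
          \<and> norm (deriv (h m) 1) \<le> C * ln (real m + 1) ^ 2 / real (sqf_part m)
          \<and> norm (deriv (deriv (h m)) 1) \<le> C * ln (real m + 1) ^ 2 / real (sqf_part m))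
       \<and> (\<forall>\<sigma>::real. 1/2 < \<sigma> \<and> \<sigma> < 1 \<longrightarrow>
            (\<exists>C K. \<forall>m::nat. m \<ge> 1 \<longrightarrow> (\<forall>s::complex. Re s > \<sigma> \<longrightarrow>
               norm (h m s) \<le> C * real m powr (K / ln (1 + real m) powr (\<sigma>/2)) / real (sqf_part m))))"
proof (intro conjI allI impI, goal_cases)
  case 1
  show ?case
    using norm_higher_deriv_h_at_1_le_ln_squared[of _ 0] norm_higher_deriv_h_at_1_le_ln_squared[of _ 1]
      norm_higher_deriv_h_at_1_le_ln_squared[of _ 2]
    by (intro exI[of _ "256 * kappa_bound (3/4)"]) (simp add: numeral_2_eq_2)
next
  case (2 \<sigma>)
  then show ?case
    by (intro exI[of _ "2 * kappa_bound \<sigma>"] exI[of _ 28]) (auto intro: norm_h_le_powr)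
qed

end
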